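(* Let $D\subset\mathbb{R}^3$ be a bounded domain with Lipschitz boundary $S$, let $k>0$ be a constant, and let $a\geq 0$. Let $f:\mathbb{R}\to\mathbb{R}$ be continuous on $\{u:|u|\geq a\}$ and, on $\{u:|u|\leq a\}$, bounded and piecewise-continuous with at most finitely many discontinuity points $u_j$ at which $f(u_j\pm 0)$ exist. If $u f(u)\geq 0$ for all $|u|\geq a$, then every solution $u\in H^2(D)\cap\overset{\circ}{H}{}^1(D)$ of the problem $$(-\Delta+k^2)u+f(u)=0 \text{ in } D,\qquad u=0 \text{ on } S,$$ satisfies $|u(x)|\leq a$ for all $x\in D$.
   Context: $H^2(D)$ is the usual Sobolev space and $\overset{\circ}{H}{}^1(D)$ is the closure of $C_0^\infty(D)$ in the $H^1(D)$ norm. *)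

theory Defs
  imports "HOL-Analysis.Analysis"
begin

type_synonym R3 = "real ^ 3"

definition pd :: "3 \<Rightarrow> (R3 \<Rightarrow> real) \<Rightarrow> R3 \<Rightarrow> real" where
  "pd i \<phi> x = deriv (\<lambda>t. \<phi> (x + t *\<^sub>R axis i 1)) 0"

fun iterpd :: "3 list \<Rightarrow> (R3 \<Rightarrow> real) \<Rightarrow> R3 \<Rightarrow> real" where
  "iterpd [] \<phi> = \<phi>"
| "iterpd (i # is) \<phi> = pd i (iterpd is \<phi>)"

definition smooth_fun :: "(R3 \<Rightarrow> real) \<Rightarrow> bool" where
  "smooth_fun \<phi> \<longleftrightarrow> (\<forall>is. iterpd is \<phi> differentiable_on UNIV)"

definition test_fun :: "R3 set \<Rightarrow> (R3 \<Rightarrow> real) \<Rightarrow> bool" where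
  "test_fun D \<phi> \<longleftrightarrow> smooth_fun \<phi> \<and> compact (closure {x. \<phi> x \<noteq> 0})
      \<and> closure {x. \<phi> x \<noteq> 0} \<subseteq> D"

definition L2 :: "R3 set \<Rightarrow> (R3 \<Rightarrow> real) \<Rightarrow> bool" where
  "L2 D u \<longleftrightarrow> (\<lambda>x. indicator D x * u x) \<in> borel_measurable lebesgue
      \<and> set_integrable lebesgue D (\<lambda>x. (u x)\<^sup>2)"

definition weak_pd :: "R3 set \<Rightarrow> 3 \<Rightarrow> (R3 \<Rightarrow> real) \<Rightarrow> (R3 \<Rightarrow> real) \<Rightarrow> bool" where
  "weak_pd D i u g \<longleftrightarrow>
     set_integrable lebesgue D u \<and> set_integrable lebesgue D g \<and>
     (\<forall>\<phi>. test_fun D \<phi> \<longrightarrow>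
        (LINT x:D|lebesgue. u x * pd i \<phi> x) = - (LINT x:D|lebesgue. g x * \<phi> x))"

definition H1 :: "R3 set \<Rightarrow> (R3 \<Rightarrow> real) \<Rightarrow> bool" where
  "H1 D u \<longleftrightarrow> L2 D u \<and> (\<forall>i. \<exists>g. L2 D g \<and> weak_pd D i u g)"

definition H2 :: "R3 set \<Rightarrow> (R3 \<Rightarrow> real) \<Rightarrow> bool" where
  "H2 D u \<longleftrightarrow> L2 D u \<and> (\<exists>g G. \<forall>i. L2 D (g i) \<and> weak_pd D i u (g i)
      \<and> (\<forall>j. L2 D (G i j) \<and> weak_pd D j (g i) (G i j)))"

text \<open>Closure of C_0^infinity(D) in the H^1(D) norm.\<close>
definition H01 :: "R3 set \<Rightarrow> (R3 \<Rightarrow> real) \<Rightarrow> bool" where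
  "H01 D u \<longleftrightarrow> L2 D u \<and> (\<exists>g. (\<forall>i. L2 D (g i) \<and> weak_pd D i u (g i)) \<and>
     (\<exists>\<phi> :: nat \<Rightarrow> R3 \<Rightarrow> real. (\<forall>n. test_fun D (\<phi> n)) \<and>
        (\<lambda>n. LINT x:D|lebesgue. (u x - \<phi> n x)\<^sup>2) \<longlonglongrightarrow> 0 \<and>
        (\<forall>i. (\<lambda>n. LINT x:D|lebesgue. (g i x - pd i (\<phi> n) x)\<^sup>2) \<longlonglongrightarrow> 0)))"

definition lipschitz_boundary :: "R3 set \<Rightarrow> bool" where
  "lipschitz_boundary D \<longleftrightarrow> (\<forall>p\<in>frontier D. \<exists>r>0. \<exists>(R :: R3 \<Rightarrow> R3) (h :: real \<Rightarrow> real \<Rightarrow> real) (L :: real).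
     orthogonal_transformation R \<and>
     (\<forall>y1 y2 z1 z2. \<bar>h y1 y2 - h z1 z2\<bar> \<le> L * sqrt ((y1 - z1)\<^sup>2 + (y2 - z2)\<^sup>2)) \<and>
     D \<inter> ball p r = {x \<in> ball p r. (R (x - p)) $ 3 < h ((R (x - p)) $ 1) ((R (x - p)) $ 2)})"

definition solves_eq :: "R3 set \<Rightarrow> real \<Rightarrow> (real \<Rightarrow> real) \<Rightarrow> (R3 \<Rightarrow> real) \<Rightarrow> bool" where
  "solves_eq D k f u \<longleftrightarrow> (\<exists>g G. (\<forall>i. weak_pd D i u (g i) \<and> (\<forall>j. weak_pd D j (g i) (G i j))) \<and>
     (AE x in lebesgue. x \<in> D \<longrightarrow> - (\<Sum>i\<in>UNIV. G i i x) + k\<^sup>2 * u x + f (u x) = 0))"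

end

theory Submission
  imports Defs
begin

text \<open>Let \<open>F\<close> be smooth with \<open>F = 0\<close> on \<open>(-\<infinity>, a]\<close>, \<open>F > 0\<close> on \<open>(a, \<infinity>)\<close> and
  \<open>0 \<le> F' \<le> B\<close>; it is built from the flat function \<open>exp(-1/s)\<close>. As \<open>F(0) = 0\<close>, \<open>F(\<phi>)\<close> is a test
  function for every test function \<open>\<phi>\<close>, and integrating by parts twice gives
  \<open>\<integral> \<Delta>u F(\<phi>) = - \<Sum>\<^sub>i \<integral> \<partial>\<^sub>iu F'(\<phi>) \<partial>\<^sub>i\<phi> \<le> B/2 \<Sum>\<^sub>i \<parallel>\<partial>\<^sub>iu - \<partial>\<^sub>i\<phi>\<parallel>\<^sup>2\<close>,
  since \<open>-pq \<le> (p - q)\<^sup>2/2\<close>. Letting \<open>\<phi>\<close> run through test functions converging to \<open>u\<close> in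
  \<open>H\<^sup>1\<close> (along a subsequence converging a.e.), dominated convergence yields
  \<open>\<integral> \<Delta>u F(u) \<le> 0\<close>. But on \<open>{u > a}\<close> the equation gives \<open>\<Delta>u = k\<^sup>2u + f(u) > 0\<close> and
  \<open>F(u) > 0\<close>, so this set is null. The function \<open>-F(-t)\<close> gives \<open>u \<ge> -a\<close> in the same way.

  Only the sign condition on \<open>f\<close> enters.\<close>

section \<open>Smooth functions and test functions\<close>

lemma iterpd_append: "iterpd is (iterpd js \<phi>) = iterpd (is @ js) \<phi>"
  by (induction "is") auto

lemma smooth_fun_iterpd: "smooth_fun \<phi> \<Longrightarrow> smooth_fun (iterpd is \<phi>)"
  unfolding smooth_fun_def by (simp add: iterpd_append)

lemma smooth_fun_pd: "smooth_fun \<phi> \<Longrightarrow> smooth_fun (pd i \<phi>)"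
  using smooth_fun_iterpd[of \<phi> "[i]"] by simp

lemma smooth_fun_differentiable: "smooth_fun \<phi> \<Longrightarrow> \<phi> differentiable at x"
  unfolding smooth_fun_def
  by (metis UNIV_I iterpd.simps(1) differentiable_on_eq_differentiable_at open_UNIV)

lemma has_real_derivative_pd:
  assumes "h differentiable at x"
  shows "((\<lambda>t. h (x + t *\<^sub>R axis i 1)) has_real_derivative pd i h x) (at 0)"
proof -
  have "(h \<circ> (\<lambda>t::real. x + t *\<^sub>R axis i 1)) differentiable at 0"
    using assms by (intro differentiable_chain_at derivative_intros) simp
  then show ?thesis
    unfolding pd_def o_def using DERIV_deriv_iff_real_differentiable by blast
qed

lemma pd_add:
  assumes "a differentiable at x" "b differentiable at x"
  shows "pd i (\<lambda>x. a x + b x) x = pd i a x + pd i b x"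
  unfolding pd_def[of i "\<lambda>x. a x + b x"]
  using DERIV_add[OF has_real_derivative_pd[OF assms(1), of i] has_real_derivative_pd[OF assms(2), of i]]
  by (rule DERIV_imp_deriv)

lemma pd_mult:
  assumes "a differentiable at x" "b differentiable at x"
  shows "pd i (\<lambda>x. a x * b x) x = pd i a x * b x + a x * pd i b x"
  unfolding pd_def[of i "\<lambda>x. a x * b x"]
  using DERIV_mult[OF has_real_derivative_pd[OF assms(1), of i] has_real_derivative_pd[OF assms(2), of i]]
  by (intro DERIV_imp_deriv) (simp add: mult.commute)

lemma pd_comp:
  assumes "\<phi> differentiable at x" "(F has_real_derivative F') (at (\<phi> x))"
  shows "pd i (\<lambda>x. F (\<phi> x)) x = F' * pd i \<phi> x"
  unfolding pd_def[of i "\<lambda>x. F (\<phi> x)"]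
proof (rule DERIV_imp_deriv)
  have "(F has_real_derivative F') (at (\<phi> (x + 0 *\<^sub>R axis i 1)))"
    using assms(2) by simp
  from DERIV_chain2[OF this has_real_derivative_pd[OF assms(1)]]
  show "((\<lambda>t. F (\<phi> (x + t *\<^sub>R axis i 1))) has_real_derivative F' * pd i \<phi> x) (at 0)" .
qed

definition derivative_tower :: "(nat \<Rightarrow> real \<Rightarrow> real) \<Rightarrow> bool" where
  "derivative_tower F \<longleftrightarrow> (\<forall>k t. (F k has_real_derivative F (Suc k) t) (at t))"

lemma derivative_tower_differentiable: "derivative_tower F \<Longrightarrow> F k differentiable at t"
  unfolding derivative_tower_def using real_differentiable_def by blast

lemma derivative_tower_continuous: "derivative_tower F \<Longrightarrow> continuous_on UNIV (F k)"
  unfolding derivative_tower_def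
  using DERIV_isCont continuous_at_imp_continuous_on by blast

lemma derivative_tower_affine:
  assumes "derivative_tower E"
  shows "derivative_tower (\<lambda>k t. c * \<sigma> ^ k * E k (\<sigma> * t + d))"
  unfolding derivative_tower_def
proof (intro allI)
  fix k t
  have "((\<lambda>t. E k (\<sigma> * t + d)) has_real_derivative E (Suc k) (\<sigma> * t + d) * \<sigma>) (at t)"
    using assms unfolding derivative_tower_def
    by (intro DERIV_chain2[of "E k"]) (auto intro!: derivative_eq_intros)
  then show "((\<lambda>t. c * \<sigma> ^ k * E k (\<sigma> * t + d)) has_real_derivative
      c * \<sigma> ^ Suc k * E (Suc k) (\<sigma> * t + d)) (at t)"
    by (auto dest: DERIV_cmult[where c="c * \<sigma> ^ k"] simp: algebra_simps)
qed

text \<open>By the chain and product rules, every iterated partial derivative of \<open>F 0 \<circ> \<phi>\<close> stays in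
  this algebra, all of whose members are differentiable.\<close>
inductive_set comp_algebra :: "(R3 \<Rightarrow> real) \<Rightarrow> (nat \<Rightarrow> real \<Rightarrow> real) \<Rightarrow> (R3 \<Rightarrow> real) set"
  for \<phi> F where
  iterpd: "iterpd is \<phi> \<in> comp_algebra \<phi> F"
| comp: "(\<lambda>x. F k (\<phi> x)) \<in> comp_algebra \<phi> F"
| add: "a \<in> comp_algebra \<phi> F \<Longrightarrow> b \<in> comp_algebra \<phi> F \<Longrightarrow> (\<lambda>x. a x + b x) \<in> comp_algebra \<phi> F"
| mult: "a \<in> comp_algebra \<phi> F \<Longrightarrow> b \<in> comp_algebra \<phi> F \<Longrightarrow> (\<lambda>x. a x * b x) \<in> comp_algebra \<phi> F"

lemma comp_algebra_differentiable:
  assumes "smooth_fun \<phi>" "derivative_tower F" "h \<in> comp_algebra \<phi> F"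
  shows "h differentiable at x"
  using assms(3)
proof induction
  case (iterpd "is")
  show ?case by (rule smooth_fun_differentiable[OF smooth_fun_iterpd[OF assms(1)]])
next
  case (comp k)
  show ?case
    using differentiable_chain_at[OF smooth_fun_differentiable[OF assms(1)]
        derivative_tower_differentiable[OF assms(2)]]
    by (simp add: o_def)
qed (auto intro: differentiable_add differentiable_mult)

lemma comp_algebra_pd:
  assumes "smooth_fun \<phi>" "derivative_tower F" "h \<in> comp_algebra \<phi> F"
  shows "pd i h \<in> comp_algebra \<phi> F"
  using assms(3)
proof induction
  case (iterpd "is")
  show ?case using comp_algebra.iterpd[of "i # is"] by simp
next
  case (comp k)
  have "pd i (\<lambda>x. F k (\<phi> x)) = (\<lambda>x. F (Suc k) (\<phi> x) * iterpd [i] \<phi> x)"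
    using pd_comp[OF smooth_fun_differentiable[OF assms(1)]] assms(2)
    unfolding derivative_tower_def by auto
  then show ?case using comp_algebra.mult[OF comp_algebra.comp comp_algebra.iterpd[of "[i]"]] by simp
next
  case (add a b)
  then show ?case
    using pd_add comp_algebra_differentiable[OF assms(1,2)]
    by (auto intro: comp_algebra.add)
next
  case (mult a b)
  then have "pd i (\<lambda>x. a x * b x) = (\<lambda>x. pd i a x * b x + a x * pd i b x)"
    using pd_mult comp_algebra_differentiable[OF assms(1,2)] by blast
  then show ?case using mult by (auto intro: comp_algebra.intros)
qed

lemma smooth_fun_comp:
  assumes "smooth_fun \<phi>" "derivative_tower F"
  shows "smooth_fun (\<lambda>x. F 0 (\<phi> x))"
proof -
  have "iterpd is (\<lambda>x. F 0 (\<phi> x)) \<in> comp_algebra \<phi> F" for "is"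
    by (induction "is") (auto intro: comp_algebra.comp comp_algebra_pd[OF assms])
  then show ?thesis
    unfolding smooth_fun_def
    using comp_algebra_differentiable[OF assms] differentiable_at_imp_differentiable_on by blast
qed

lemma pd_eq_0_outside_support:
  assumes "x \<notin> closure {y. \<phi> y \<noteq> 0}"
  shows "pd i \<phi> x = 0"
proof -
  obtain e where "e > 0" and e: "ball x e \<subseteq> - closure {y. \<phi> y \<noteq> 0}"
    using assms open_contains_ball[of "- closure {y. \<phi> y \<noteq> 0}"] by auto
  then have zero: "\<phi> y = 0" if "y \<in> ball x e" for y
    using that closure_subset[of "{y. \<phi> y \<noteq> 0}"] by blast
  have ev: "\<forall>\<^sub>F t in nhds 0. \<phi> (x + t *\<^sub>R axis i 1) = 0"
    unfolding eventually_nhds_metric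
  proof (intro exI[of _ e] conjI allI impI)
    fix t :: real assume "dist t 0 < e"
    then have "x + t *\<^sub>R axis i 1 \<in> ball x e" by (simp add: dist_norm)
    then show "\<phi> (x + t *\<^sub>R axis i 1) = 0" by (rule zero)
  qed (fact \<open>e > 0\<close>)
  have "((\<lambda>t. \<phi> (x + t *\<^sub>R axis i 1)) has_real_derivative 0) (at 0)"
    using DERIV_cong_ev[OF refl ev refl, THEN iffD2] by simp
  then show ?thesis unfolding pd_def by (rule DERIV_imp_deriv)
qed

lemma test_fun_support_subset:
  assumes "test_fun D \<phi>" "{x. \<psi> x \<noteq> 0} \<subseteq> closure {x. \<phi> x \<noteq> 0}" "smooth_fun \<psi>"
  shows "test_fun D \<psi>"
proof -
  let ?K\<phi> = "closure {x. \<phi> x \<noteq> 0}" and ?K\<psi> = "closure {x. \<psi> x \<noteq> 0}"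
  have K\<phi>: "compact ?K\<phi>" "?K\<phi> \<subseteq> D"
    using assms(1) unfolding test_fun_def by auto
  have sub: "?K\<psi> \<subseteq> ?K\<phi>"
    using assms(2) by (simp add: closure_minimal)
  have "compact (?K\<phi> \<inter> ?K\<psi>)"
    using K\<phi>(1) by (rule compact_Int_closed) simp
  moreover have "?K\<phi> \<inter> ?K\<psi> = ?K\<psi>"
    using sub by blast
  ultimately show ?thesis
    using assms(3) sub K\<phi>(2) unfolding test_fun_def by auto
qed

lemma test_fun_pd:
  assumes "test_fun D \<phi>"
  shows "test_fun D (pd i \<phi>)"
proof (rule test_fun_support_subset[OF assms])
  show "{x. pd i \<phi> x \<noteq> 0} \<subseteq> closure {x. \<phi> x \<noteq> 0}"
    using pd_eq_0_outside_support by blast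
  show "smooth_fun (pd i \<phi>)"
    using assms smooth_fun_pd unfolding test_fun_def by blast
qed

lemma test_fun_comp:
  assumes "test_fun D \<phi>" "derivative_tower F" "F 0 0 = 0"
  shows "test_fun D (\<lambda>x. F 0 (\<phi> x))"
proof (rule test_fun_support_subset[OF assms(1)])
  show "{x. F 0 (\<phi> x) \<noteq> 0} \<subseteq> closure {x. \<phi> x \<noteq> 0}"
    using assms(3) closure_subset by fastforce
  show "smooth_fun (\<lambda>x. F 0 (\<phi> x))"
    using assms(1,2) smooth_fun_comp unfolding test_fun_def by blast
qed

lemma test_fun_continuous: "test_fun D \<phi> \<Longrightarrow> continuous_on UNIV \<phi>"
  unfolding test_fun_def
  using smooth_fun_differentiable differentiable_at_imp_differentiable_on
    differentiable_imp_continuous_on by blast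

lemma test_fun_measurable: "test_fun D \<phi> \<Longrightarrow> \<phi> \<in> borel_measurable lebesgue"
proof -
  assume "test_fun D \<phi>"
  then have "\<phi> \<in> borel_measurable borel"
    by (intro borel_measurable_continuous_onI test_fun_continuous)
  then have "\<phi> \<in> borel_measurable lborel" by simp
  then show ?thesis by (rule measurable_completion)
qed

lemma test_fun_bounded:
  assumes "test_fun D \<phi>"
  obtains C where "\<And>x. \<bar>\<phi> x\<bar> \<le> C"
proof -
  let ?K = "closure {x. \<phi> x \<noteq> 0}"
  have "continuous_on ?K \<phi>"
    using continuous_on_subset[OF test_fun_continuous[OF assms] subset_UNIV] .
  moreover have "compact ?K"
    using assms unfolding test_fun_def by blast
  ultimately have "compact (\<phi> ` ?K)"
    by (rule compact_continuous_image)
  then have "bounded (\<phi> ` ?K)"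
    by (rule compact_imp_bounded)
  then obtain C where C: "\<forall>y\<in>\<phi> ` ?K. \<bar>y\<bar> \<le> C"
    by (meson bounded_real)
  have "\<bar>\<phi> x\<bar> \<le> max C 0" for x
  proof (cases "\<phi> x = 0")
    case False
    then have "\<phi> x \<in> \<phi> ` ?K"
      using closure_subset[of "{x. \<phi> x \<noteq> 0}"] by blast
    then show ?thesis using C by fastforce
  qed simp
  then show thesis by (rule that)
qed

section \<open>The flat function\<close>

lemma poly_times_exp_neg_tendsto_0:
  fixes p :: "real poly"
  shows "((\<lambda>y. poly p y * exp (- y)) \<longlongrightarrow> 0) at_top"
proof -
  have "((\<lambda>y::real. coeff p i * (y ^ i / exp y)) \<longlongrightarrow> 0) at_top" for i
    by (intro tendsto_mult_right_zero tendsto_power_div_exp_0)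
  then have "((\<lambda>y. \<Sum>i\<le>degree p. coeff p i * (y ^ i / exp y)) \<longlongrightarrow> 0) at_top"
    by (intro tendsto_null_sum) auto
  moreover have "poly p y * exp (- y) = (\<Sum>i\<le>degree p. coeff p i * (y ^ i / exp y))" for y
    by (simp add: poly_altdef sum_distrib_right exp_minus divide_inverse mult.assoc)
  ultimately show ?thesis by simp
qed

text \<open>\<open>flat k s = P\<^sub>k(1/s) exp(-1/s)\<close> for \<open>s > 0\<close> is the \<open>k\<close>-th derivative of the flat function
  \<open>exp(-1/s)\<close>; differentiating gives \<open>P\<^sub>k\<^sub>+\<^sub>1(y) = y\<^sup>2 (P\<^sub>k(y) - P\<^sub>k'(y))\<close>.\<close>
fun flat_poly :: "nat \<Rightarrow> real poly" where
  "flat_poly 0 = 1"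
| "flat_poly (Suc k) = monom 1 2 * (flat_poly k - pderiv (flat_poly k))"

definition flat :: "nat \<Rightarrow> real \<Rightarrow> real" where
  "flat k s = (if s \<le> 0 then 0 else poly (flat_poly k) (inverse s) * exp (- inverse s))"

lemma flat_eq_0 [simp]: "s \<le> 0 \<Longrightarrow> flat k s = 0"
  by (simp add: flat_def)

lemma flat_0_pos: "s > 0 \<Longrightarrow> flat 0 s > 0"
  by (simp add: flat_def)

lemma flat_0_bounds: "0 \<le> flat 0 s" "flat 0 s \<le> 1"
  by (auto simp: flat_def)

lemma flat_1_bounds: "0 \<le> flat 1 s" "flat 1 s \<le> 2"
proof -
  have flat_1: "flat 1 s = (if s \<le> 0 then 0 else (inverse s)\<^sup>2 * exp (- inverse s))"
    by (simp add: flat_def poly_monom)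
  show "0 \<le> flat 1 s" unfolding flat_1 by simp
  have "y\<^sup>2 * exp (- y) \<le> 2" if "y \<ge> 0" for y :: real
  proof -
    have "y\<^sup>2 \<le> 2 * exp y"
      using exp_lower_Taylor_quadratic[OF that] that by simp
    then show ?thesis by (simp add: exp_minus field_simps)
  qed
  then show "flat 1 s \<le> 2" unfolding flat_1 by simp
qed

lemma has_real_derivative_flat_pos:
  assumes "s > 0"
  shows "((\<lambda>s. poly (flat_poly k) (inverse s) * exp (- inverse s)) has_real_derivative
           poly (flat_poly (Suc k)) (inverse s) * exp (- inverse s)) (at s)"
proof -
  have inv: "(inverse has_real_derivative - (inverse s)\<^sup>2) (at s)"
    using assms DERIV_inverse[of s] by (simp add: power2_eq_square)
  have "((\<lambda>s. poly (flat_poly k) (inverse s) * exp (- inverse s)) has_real_derivative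
     poly (pderiv (flat_poly k)) (inverse s) * - (inverse s)\<^sup>2 * exp (- inverse s)
     + exp (- inverse s) * - (- (inverse s)\<^sup>2) * poly (flat_poly k) (inverse s)) (at s)"
    by (rule DERIV_mult[OF DERIV_chain2[OF poly_DERIV inv] DERIV_chain2[OF DERIV_exp DERIV_minus[OF inv]]])
  moreover have "poly (pderiv (flat_poly k)) (inverse s) * - (inverse s)\<^sup>2 * exp (- inverse s)
     + exp (- inverse s) * - (- (inverse s)\<^sup>2) * poly (flat_poly k) (inverse s)
     = poly (flat_poly (Suc k)) (inverse s) * exp (- inverse s)"
    by (simp add: poly_monom algebra_simps power2_eq_square)
  ultimately show ?thesis by simp
qed

lemma has_real_derivative_flat_0: "(flat k has_real_derivative 0) (at 0)"
proof -
  have "\<forall>\<^sub>F s in at_left 0. 0 = flat k s / s"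
    unfolding eventually_at_left_field by (intro exI[of _ "-1"]) simp
  then have "((\<lambda>s. flat k s / s) \<longlongrightarrow> 0) (at_left 0)"
    by (rule Lim_transform_eventually[OF tendsto_const])
  moreover have "((\<lambda>s. flat k s / s) \<longlongrightarrow> 0) (at_right 0)"
    unfolding filterlim_at_right_to_top
  proof (rule Lim_transform_eventually[OF poly_times_exp_neg_tendsto_0[of "pCons 0 (flat_poly k)"]])
    \<comment> \<open>on the right of \<open>0\<close> the difference quotient is \<open>y P\<^sub>k(y) exp(-y)\<close> with \<open>y = 1/s\<close>\<close>
    show "\<forall>\<^sub>F y in at_top. poly (pCons 0 (flat_poly k)) y * exp (- y) = flat k (inverse y) / inverse y"
      using eventually_gt_at_top[of 0] by eventually_elim (auto simp: flat_def divide_inverse)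
  qed
  ultimately have "((\<lambda>s. (flat k s - flat k 0) / (s - 0)) \<longlongrightarrow> 0) (at 0)"
    by (simp add: filterlim_at_split)
  then show ?thesis by (simp add: has_field_derivative_iff)
qed

lemma derivative_tower_flat: "derivative_tower flat"
  unfolding derivative_tower_def
proof (intro allI)
  fix k and s :: real
  consider "s > 0" | "s < 0" | "s = 0" by linarith
  then show "(flat k has_real_derivative flat (Suc k) s) (at s)"
  proof cases
    case 1
    have "\<forall>\<^sub>F t in nhds s. t \<in> {0<..}"
      using 1 by (intro eventually_nhds_in_open) auto
    then have "\<forall>\<^sub>F t in nhds s. flat k t = poly (flat_poly k) (inverse t) * exp (- inverse t)"
      by eventually_elim (simp add: flat_def)
    then show ?thesis
      using DERIV_cong_ev[OF refl _ refl, THEN iffD2, OF _ has_real_derivative_flat_pos[OF 1]] 1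
      by (simp add: flat_def)
  next
    case 2
    have "\<forall>\<^sub>F t in nhds s. t \<in> {..<0}"
      using 2 by (intro eventually_nhds_in_open) auto
    then have "\<forall>\<^sub>F t in nhds s. flat k t = 0"
      by eventually_elim simp
    then show ?thesis
      using DERIV_cong_ev[OF refl _ refl, THEN iffD2, OF _ DERIV_const] 2 by simp
  next
    case 3
    then show ?thesis using has_real_derivative_flat_0 by simp
  qed
qed

lemma set_integrable_mult_bounded:
  fixes g h :: "'a \<Rightarrow> real"
  assumes "set_integrable M A g" "h \<in> borel_measurable M" "\<And>x. \<bar>h x\<bar> \<le> C"
  shows "set_integrable M A (\<lambda>x. g x * h x)"
  unfolding set_integrable_def
proof (rule Bochner_Integration.integrable_bound)
  show "integrable M (\<lambda>x. C * (indicator A x *\<^sub>R g x))"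
    using assms(1) unfolding set_integrable_def by simp
  have "(\<lambda>x. indicator A x *\<^sub>R g x) \<in> borel_measurable M"
    using assms(1) unfolding set_integrable_def by (rule borel_measurable_integrable)
  then show "(\<lambda>x. indicator A x *\<^sub>R (g x * h x)) \<in> borel_measurable M"
    using assms(2) by (simp add: mult.assoc[symmetric])
  have "C \<ge> 0" using assms(3) abs_ge_zero order_trans by blast
  have "norm (indicator A x *\<^sub>R (g x * h x)) = \<bar>indicator A x * g x\<bar> * \<bar>h x\<bar>" for x
    by (simp add: abs_mult)
  also have "\<dots> x \<le> \<bar>indicator A x * g x\<bar> * C" for x
    by (rule mult_left_mono[OF assms(3)]) simp
  also have "\<dots> x = norm (C * (indicator A x *\<^sub>R g x))" for x
    using \<open>C \<ge> 0\<close> by (simp add: abs_mult)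
  finally show "AE x in M. norm (indicator A x *\<^sub>R (g x * h x)) \<le> norm (C * (indicator A x *\<^sub>R g x))"
    by simp
qed

lemma set_integrable_bounded:
  fixes h :: "'a \<Rightarrow> real"
  assumes "A \<in> fmeasurable M" "h \<in> borel_measurable M" "\<And>x. \<bar>h x\<bar> \<le> C"
  shows "set_integrable M A h"
  unfolding set_integrable_def
  using assms by (intro integrableI_bounded_set_indicator[where B=C]) (auto simp: fmeasurable_def)

lemma set_integrable_square_diff:
  fixes g h :: "'a \<Rightarrow> real"
  assumes "A \<in> fmeasurable M" "set_integrable M A g" "set_integrable M A (\<lambda>x. (g x)\<^sup>2)"
    and "h \<in> borel_measurable M" "\<And>x. \<bar>h x\<bar> \<le> C"
  shows "set_integrable M A (\<lambda>x. (g x - h x)\<^sup>2)"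
proof -
  have "set_integrable M A (\<lambda>x. (h x)\<^sup>2)"
  proof (rule set_integrable_bounded[OF assms(1)])
    show "\<bar>(h x)\<^sup>2\<bar> \<le> C\<^sup>2" for x
      using power_mono[OF assms(5)[of x] abs_ge_zero, of 2] by simp
  qed (use assms(4) in simp)
  moreover have "set_integrable M A (\<lambda>x. g x * h x)"
    using assms(2,4,5) by (rule set_integrable_mult_bounded)
  ultimately have "set_integrable M A (\<lambda>x. (g x)\<^sup>2 + (h x)\<^sup>2 - 2 * (g x * h x))"
    using assms(3) by (intro set_integral_diff set_integral_add set_integrable_mult_right)
  then show ?thesis by (simp add: power2_diff mult.assoc)
qed

lemma set_integral_sum:
  fixes f :: "'i \<Rightarrow> 'a \<Rightarrow> 'b::{banach, second_countable_topology}"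
  assumes "\<And>i. i \<in> I \<Longrightarrow> set_integrable M A (f i)"
  shows "set_integrable M A (\<lambda>x. \<Sum>i\<in>I. f i x)"
    and "(LINT x:A|M. (\<Sum>i\<in>I. f i x)) = (\<Sum>i\<in>I. LINT x:A|M. f i x)"
  using assms
  unfolding set_integrable_def set_lebesgue_integral_def scaleR_sum_right
  by (simp_all add: Bochner_Integration.integral_sum)

lemma AE_eq_0_if_set_integral_nonpos:
  fixes q :: "'a \<Rightarrow> real"
  assumes "set_integrable M A q" "(LINT x:A|M. q x) \<le> 0" "AE x in M. x \<in> A \<longrightarrow> 0 \<le> q x"
  shows "AE x in M. x \<in> A \<longrightarrow> q x = 0"
proof -
  let ?h = "\<lambda>x. indicator A x * q x"
  have nonneg: "AE x in M. 0 \<le> ?h x"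
    using assms(3) by eventually_elim (simp add: indicator_def)
  have "integral\<^sup>L M ?h = 0"
    using assms(2) integral_nonneg_AE[OF nonneg] unfolding set_lebesgue_integral_def by simp
  then have "AE x in M. ?h x = 0"
    using integral_nonneg_eq_0_iff_AE[OF _ nonneg] assms(1) unfolding set_integrable_def by simp
  then show ?thesis by eventually_elim (simp add: indicator_def)
qed

lemma set_integral_cross_term_le:
  fixes g c p :: "'a \<Rightarrow> real"
  assumes "set_integrable M A (\<lambda>x. g x * (c x * p x))" "set_integrable M A (\<lambda>x. (g x - p x)\<^sup>2)"
    and "\<And>x. 0 \<le> c x" "\<And>x. c x \<le> B"
  shows "- (LINT x:A|M. g x * (c x * p x)) \<le> B / 2 * (LINT x:A|M. (g x - p x)\<^sup>2)"
proof -
  have "- (B / 2) * (g x - p x)\<^sup>2 \<le> g x * (c x * p x)" for x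
  proof -
    have "- (g x * p x) \<le> (g x - p x)\<^sup>2 / 2"
      by (simp add: power2_diff field_simps)
    then have "c x * - (g x * p x) \<le> c x * ((g x - p x)\<^sup>2 / 2)"
      using assms(3) by (rule mult_left_mono)
    also have "\<dots> \<le> B * ((g x - p x)\<^sup>2 / 2)"
      using assms(4) by (rule mult_right_mono) simp
    finally have "c x * - (g x * p x) \<le> B * ((g x - p x)\<^sup>2 / 2)" .
    then show ?thesis by (simp add: algebra_simps)
  qed
  then have "(LINT x:A|M. - (B / 2) * (g x - p x)\<^sup>2) \<le> (LINT x:A|M. g x * (c x * p x))"
    using assms(1) set_integrable_mult_right[OF assms(2), of "- (B / 2)"]
    by (intro set_integral_mono) auto
  then show ?thesis unfolding set_integral_mult_right by linarith
qed

lemma set_tendsto_L2_AE_subseq: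
  fixes u :: "'a \<Rightarrow> real" and \<phi> :: "nat \<Rightarrow> 'a \<Rightarrow> real"
  assumes "\<And>n. set_integrable M A (\<lambda>x. (u x - \<phi> n x)\<^sup>2)"
    and "(\<lambda>n. LINT x:A|M. (u x - \<phi> n x)\<^sup>2) \<longlonglongrightarrow> 0"
  obtains r where "strict_mono r" and "AE x in M. x \<in> A \<longrightarrow> (\<lambda>n. \<phi> (r n) x) \<longlonglongrightarrow> u x"
proof -
  define w where "w n x = indicator A x * (u x - \<phi> n x)\<^sup>2" for n x
  have "integrable M (w n)" for n
    using assms(1) unfolding set_integrable_def w_def by simp
  moreover have "(\<lambda>n. \<integral>x. norm (w n x) \<partial>M) \<longlonglongrightarrow> 0"
    using assms(2) unfolding set_lebesgue_integral_def w_def by (simp add: abs_mult)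
  ultimately obtain r where r: "strict_mono r" and ae: "AE x in M. (\<lambda>n. w (r n) x) \<longlonglongrightarrow> 0"
    using tendsto_L1_AE_subseq[of M w] by blast
  have "AE x in M. x \<in> A \<longrightarrow> (\<lambda>n. \<phi> (r n) x) \<longlonglongrightarrow> u x"
    using ae
  proof eventually_elim
    case (elim x)
    show ?case
    proof
      assume "x \<in> A"
      then have "(\<lambda>n. (u x - \<phi> (r n) x)\<^sup>2) \<longlonglongrightarrow> 0"
        using elim unfolding w_def by simp
      then have "(\<lambda>n. u x - \<phi> (r n) x) \<longlonglongrightarrow> 0"
        using tendsto_real_sqrt[of _ 0] by (simp add: tendsto_rabs_zero_iff abs_minus_commute)
      then have "(\<lambda>n. u x - (u x - \<phi> (r n) x)) \<longlonglongrightarrow> u x - 0"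
        by (intro tendsto_diff tendsto_const)
      then show "(\<lambda>n. \<phi> (r n) x) \<longlonglongrightarrow> u x"
        by simp
    qed
  qed
  with r show thesis by (rule that)
qed

lemma tendsto_set_integral_comp:
  fixes H u :: "'a \<Rightarrow> real" and \<phi> :: "nat \<Rightarrow> 'a \<Rightarrow> real" and F :: "real \<Rightarrow> real"
  assumes H: "set_integrable M A H" and u: "set_borel_measurable M A u"
    and \<phi>: "\<And>n. \<phi> n \<in> borel_measurable M"
    and F: "continuous_on UNIV F" "\<And>t. \<bar>F t\<bar> \<le> C"
    and lim: "AE x in M. x \<in> A \<longrightarrow> (\<lambda>n. \<phi> n x) \<longlonglongrightarrow> u x"
  shows "(\<lambda>n. LINT x:A|M. H x * F (\<phi> n x)) \<longlonglongrightarrow> (LINT x:A|M. H x * F (u x))"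
  unfolding set_lebesgue_integral_def
proof (rule integral_dominated_convergence)
  have Fm: "F \<in> borel_measurable borel"
    using F(1) by (rule borel_measurable_continuous_onI)
  have IH: "(\<lambda>x. indicator A x * H x) \<in> borel_measurable M"
    using H unfolding set_integrable_def by (simp add: borel_measurable_integrable)
  have Iu: "(\<lambda>x. indicator A x * u x) \<in> borel_measurable M"
    using u unfolding set_borel_measurable_def by simp
  have "(\<lambda>x. indicator A x * H x * F (indicator A x * u x)) \<in> borel_measurable M"
    using IH measurable_compose[OF Iu Fm] by (rule borel_measurable_times)
  moreover have "(\<lambda>x. indicator A x * H x * F (indicator A x * u x))
      = (\<lambda>x. indicator A x *\<^sub>R (H x * F (u x)))"
    by (auto simp: indicator_def)
  ultimately show "(\<lambda>x. indicator A x *\<^sub>R (H x * F (u x))) \<in> borel_measurable M"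
    by simp
  show "(\<lambda>x. indicator A x *\<^sub>R (H x * F (\<phi> n x))) \<in> borel_measurable M" for n
    using borel_measurable_times[OF IH measurable_compose[OF \<phi> Fm]] by (simp add: mult.assoc)
  show "integrable M (\<lambda>x. C * \<bar>indicator A x * H x\<bar>)"
    using H unfolding set_integrable_def by (intro integrable_mult_right integrable_abs) simp
  show "AE x in M. norm (indicator A x *\<^sub>R (H x * F (\<phi> n x))) \<le> C * \<bar>indicator A x * H x\<bar>" for n
  proof (intro AE_I2)
    fix x
    have "norm (indicator A x *\<^sub>R (H x * F (\<phi> n x))) = \<bar>F (\<phi> n x)\<bar> * \<bar>indicator A x * H x\<bar>"
      by (simp add: abs_mult)
    also have "\<dots> \<le> C * \<bar>indicator A x * H x\<bar>"
      by (rule mult_right_mono[OF F(2)]) simp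
    finally show "norm (indicator A x *\<^sub>R (H x * F (\<phi> n x))) \<le> C * \<bar>indicator A x * H x\<bar>" .
  qed
  show "AE x in M. (\<lambda>n. indicator A x *\<^sub>R (H x * F (\<phi> n x))) \<longlonglongrightarrow> indicator A x *\<^sub>R (H x * F (u x))"
    using lim
  proof eventually_elim
    case (elim x)
    show ?case
    proof (cases "x \<in> A")
      case True
      have "isCont F (u x)"
        using F(1) by (simp add: continuous_on_eq_continuous_at)
      moreover have "(\<lambda>n. \<phi> n x) \<longlonglongrightarrow> u x"
        using elim True by simp
      ultimately have "(\<lambda>n. F (\<phi> n x)) \<longlonglongrightarrow> F (u x)"
        by (rule isCont_tendsto_compose)
      then show ?thesis using True by (simp add: tendsto_mult_left)
    qed simp
  qed
qed

section \<open>Testing the equation with \<open>F(u)\<close>\<close>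

lemma weak_pd_set_integrable:
  assumes "weak_pd D i u g"
  shows "set_integrable lebesgue D u" and "set_integrable lebesgue D g"
  using assms unfolding weak_pd_def by simp_all

lemma set_integrable_weak_laplacian:
  assumes "\<And>i. weak_pd D i (g i) (G i)"
  shows "set_integrable lebesgue D (\<lambda>x. \<Sum>i\<in>UNIV. G i x)"
  using weak_pd_set_integrable(2)[OF assms] by (rule set_integral_sum(1))

lemma set_integrable_mult_test_fun:
  assumes "set_integrable lebesgue A g" "test_fun D \<psi>"
  shows "set_integrable lebesgue A (\<lambda>x. g x * \<psi> x)"
proof -
  obtain C where "\<And>x. \<bar>\<psi> x\<bar> \<le> C"
    using test_fun_bounded[OF assms(2)] by blast
  then show ?thesis
    by (rule set_integrable_mult_bounded[OF assms(1) test_fun_measurable[OF assms(2)]])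
qed

lemma set_integrable_square_diff_test_fun:
  assumes "A \<in> lmeasurable" "set_integrable lebesgue A g" "L2 A g" "test_fun D \<psi>"
  shows "set_integrable lebesgue A (\<lambda>x. (g x - \<psi> x)\<^sup>2)"
proof -
  obtain C where C: "\<And>x. \<bar>\<psi> x\<bar> \<le> C"
    using test_fun_bounded[OF assms(4)] by blast
  have "set_integrable lebesgue A (\<lambda>x. (g x)\<^sup>2)"
    using assms(3) by (simp add: L2_def)
  then show ?thesis
    using test_fun_measurable[OF assms(4)] C by (rule set_integrable_square_diff[OF assms(1,2)])
qed

text \<open>The two weak derivatives \<open>g\<close>, \<open>g'\<close> of \<open>u\<close> need not coincide, but they act identically on
  derivatives of test functions.\<close>
lemma weak_pd_twice_test_fun:
  assumes "weak_pd D i u g" "weak_pd D i u g'" "weak_pd D i g' G" "test_fun D \<psi>"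
  shows "(LINT x:D|lebesgue. G x * \<psi> x) = - (LINT x:D|lebesgue. g x * pd i \<psi> x)"
proof -
  have "(LINT x:D|lebesgue. g' x * pd i \<psi> x) = - (LINT x:D|lebesgue. G x * \<psi> x)"
    using assms(3,4) unfolding weak_pd_def by blast
  moreover have "(LINT x:D|lebesgue. u x * pd i (pd i \<psi>) x) = - (LINT x:D|lebesgue. g' x * pd i \<psi> x)"
    "(LINT x:D|lebesgue. u x * pd i (pd i \<psi>) x) = - (LINT x:D|lebesgue. g x * pd i \<psi> x)"
    using assms(1,2) test_fun_pd[OF assms(4)] unfolding weak_pd_def by blast+
  ultimately show ?thesis by linarith
qed

lemma weak_laplacian_comp_test_fun_le:
  fixes g g' :: "3 \<Rightarrow> R3 \<Rightarrow> real" and G :: "3 \<Rightarrow> R3 \<Rightarrow> real"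
  assumes D: "D \<in> lmeasurable"
    and g: "\<And>i. L2 D (g i) \<and> weak_pd D i u (g i)"
    and g': "\<And>i. weak_pd D i u (g' i)" and G: "\<And>i. weak_pd D i (g' i) (G i)"
    and \<phi>: "test_fun D \<phi>"
    and F: "derivative_tower F" "F 0 0 = 0" "\<And>t. 0 \<le> F 1 t" "\<And>t. F 1 t \<le> B"
  shows "(LINT x:D|lebesgue. (\<Sum>i\<in>UNIV. G i x) * F 0 (\<phi> x))
    \<le> (\<Sum>i\<in>UNIV. B / 2 * (LINT x:D|lebesgue. (g i x - pd i \<phi> x)\<^sup>2))"
proof -
  let ?\<psi> = "\<lambda>x. F 0 (\<phi> x)"
  have \<psi>: "test_fun D ?\<psi>"
    by (rule test_fun_comp[OF \<phi> F(1,2)])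
  have pd_\<psi>: "pd i ?\<psi> x = F 1 (\<phi> x) * pd i \<phi> x" for i x
    using \<phi> F(1) unfolding test_fun_def derivative_tower_def
    by (intro pd_comp smooth_fun_differentiable) auto
  have gi: "set_integrable lebesgue D (g i)" for i
    using g weak_pd_set_integrable(2) by blast
  have G_int: "set_integrable lebesgue D (\<lambda>x. G i x * ?\<psi> x)" for i
    using weak_pd_set_integrable(2)[OF G] \<psi> by (rule set_integrable_mult_test_fun)
  have "(LINT x:D|lebesgue. G i x * ?\<psi> x) \<le> B / 2 * (LINT x:D|lebesgue. (g i x - pd i \<phi> x)\<^sup>2)"
    for i
  proof -
    have "(LINT x:D|lebesgue. G i x * ?\<psi> x)
        = - (LINT x:D|lebesgue. g i x * (F 1 (\<phi> x) * pd i \<phi> x))"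
      using weak_pd_twice_test_fun[OF conjunct2[OF g] g' G \<psi>] by (simp add: pd_\<psi>)
    also have "\<dots> \<le> B / 2 * (LINT x:D|lebesgue. (g i x - pd i \<phi> x)\<^sup>2)"
    proof (rule set_integral_cross_term_le[OF _ _ F(3,4)])
      show "set_integrable lebesgue D (\<lambda>x. g i x * (F 1 (\<phi> x) * pd i \<phi> x))"
        using set_integrable_mult_test_fun[OF gi test_fun_pd[OF \<psi>]] by (simp add: pd_\<psi>)
      show "set_integrable lebesgue D (\<lambda>x. (g i x - pd i \<phi> x)\<^sup>2)"
        using D gi conjunct1[OF g] test_fun_pd[OF \<phi>] by (rule set_integrable_square_diff_test_fun)
    qed
    finally show ?thesis .
  qed
  then have "(\<Sum>i\<in>UNIV. LINT x:D|lebesgue. G i x * ?\<psi> x)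
      \<le> (\<Sum>i\<in>UNIV. B / 2 * (LINT x:D|lebesgue. (g i x - pd i \<phi> x)\<^sup>2))"
    by (rule sum_mono)
  then show ?thesis
    using set_integral_sum(2)[where I=UNIV and A=D and f="\<lambda>i x. G i x * ?\<psi> x"] G_int
    by (simp add: sum_distrib_right)
qed

lemma weak_laplacian_comp_le_0:
  fixes g' :: "3 \<Rightarrow> R3 \<Rightarrow> real" and G :: "3 \<Rightarrow> R3 \<Rightarrow> real"
  assumes D: "D \<in> lmeasurable" and u: "H01 D u"
    and g': "\<And>i. weak_pd D i u (g' i)" and G: "\<And>i. weak_pd D i (g' i) (G i)"
    and F: "derivative_tower F" "F 0 0 = 0" "\<And>t. \<bar>F 0 t\<bar> \<le> M" "\<And>t. 0 \<le> F 1 t" "\<And>t. F 1 t \<le> B"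
  shows "(LINT x:D|lebesgue. (\<Sum>i\<in>UNIV. G i x) * F 0 (u x)) \<le> 0"
proof -
  from u obtain g \<phi> where u_L2: "L2 D u" and g: "\<And>i. L2 D (g i) \<and> weak_pd D i u (g i)"
    and \<phi>: "\<And>n. test_fun D (\<phi> n)"
    and lim_u: "(\<lambda>n. LINT x:D|lebesgue. (u x - \<phi> n x)\<^sup>2) \<longlonglongrightarrow> 0"
    and lim_g: "\<And>i. (\<lambda>n. LINT x:D|lebesgue. (g i x - pd i (\<phi> n) x)\<^sup>2) \<longlonglongrightarrow> 0"
    unfolding H01_def by blast
  let ?H = "\<lambda>x. \<Sum>i\<in>UNIV. G i x"
  have "set_integrable lebesgue D (\<lambda>x. (u x - \<phi> n x)\<^sup>2)" for n
    using D weak_pd_set_integrable(1)[OF g'] u_L2 \<phi> by (rule set_integrable_square_diff_test_fun)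
  then obtain r where r: "strict_mono r" and ae: "AE x in lebesgue. x \<in> D \<longrightarrow> (\<lambda>n. \<phi> (r n) x) \<longlonglongrightarrow> u x"
    using lim_u by (rule set_tendsto_L2_AE_subseq)
  have "set_borel_measurable lebesgue D u"
    using u_L2 unfolding L2_def set_borel_measurable_def by simp
  then have lim: "(\<lambda>n. LINT x:D|lebesgue. ?H x * F 0 (\<phi> (r n) x)) \<longlonglongrightarrow> (LINT x:D|lebesgue. ?H x * F 0 (u x))"
    using test_fun_measurable[OF \<phi>] derivative_tower_continuous[OF F(1)] F(3) ae
    by (rule tendsto_set_integral_comp[OF set_integrable_weak_laplacian[OF G]])
  have "(\<lambda>n. \<Sum>i\<in>UNIV. B / 2 * (LINT x:D|lebesgue. (g i x - pd i (\<phi> n) x)\<^sup>2))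
      \<longlonglongrightarrow> (\<Sum>i\<in>(UNIV :: 3 set). 0)"
    by (intro tendsto_sum tendsto_mult_right_zero lim_g)
  then have "(\<lambda>n. \<Sum>i\<in>UNIV. B / 2 * (LINT x:D|lebesgue. (g i x - pd i (\<phi> (r n)) x)\<^sup>2)) \<longlonglongrightarrow> 0"
    using LIMSEQ_subseq_LIMSEQ[OF _ r] by (simp add: o_def)
  moreover have "(LINT x:D|lebesgue. ?H x * F 0 (\<phi> (r n) x))
      \<le> (\<Sum>i\<in>UNIV. B / 2 * (LINT x:D|lebesgue. (g i x - pd i (\<phi> (r n)) x)\<^sup>2))" for n
    by (rule weak_laplacian_comp_test_fun_le[OF D g g' G \<phi> F(1,2,4,5)])
  ultimately show ?thesis
    using lim by (intro LIMSEQ_le) auto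
qed

text \<open>With \<open>F(t) = \<sigma> flat\<^sub>0(\<sigma> t - a)\<close> the integrand \<open>\<Delta>u F(u)\<close> is nonnegative by hypothesis, and it
  is positive where \<open>\<sigma> u > a\<close>; since its integral is \<open>\<le> 0\<close>, that set is null.\<close>
lemma weak_maximum_principle:
  fixes g' :: "3 \<Rightarrow> R3 \<Rightarrow> real" and G :: "3 \<Rightarrow> R3 \<Rightarrow> real" and \<sigma> a :: real
  assumes D: "D \<in> lmeasurable" and u: "H01 D u" and "a \<ge> 0"
    and g': "\<And>i. weak_pd D i u (g' i)" and G: "\<And>i. weak_pd D i (g' i) (G i)"
    and pos: "AE x in lebesgue. x \<in> D \<longrightarrow> \<sigma> * u x > a \<longrightarrow> \<sigma> * (\<Sum>i\<in>UNIV. G i x) > 0"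
  shows "AE x in lebesgue. x \<in> D \<longrightarrow> \<sigma> * u x \<le> a"
proof -
  let ?H = "\<lambda>x. \<Sum>i\<in>UNIV. G i x"
  define F where "F k t = \<sigma> * \<sigma> ^ k * flat k (\<sigma> * t + - a)" for k t
  have tower: "derivative_tower F"
    unfolding F_def[abs_def] by (rule derivative_tower_affine[OF derivative_tower_flat])
  have F0: "F 0 0 = 0" "\<bar>F 0 t\<bar> \<le> \<bar>\<sigma>\<bar>" for t
    using \<open>a \<ge> 0\<close> flat_0_bounds[of "\<sigma> * t + - a"] by (auto simp: F_def abs_mult intro: mult_left_le)
  have F1: "0 \<le> F 1 t" "F 1 t \<le> \<sigma>\<^sup>2 * 2" for t
    using flat_1_bounds[of "\<sigma> * t + - a"] by (auto simp: F_def power2_eq_square intro!: mult_left_mono)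
  have int_le: "(LINT x:D|lebesgue. ?H x * F 0 (u x)) \<le> 0"
    by (rule weak_laplacian_comp_le_0[OF D u g' G tower F0 F1])
  have int: "set_integrable lebesgue D (\<lambda>x. ?H x * F 0 (u x))"
  proof -
    have "(\<lambda>x. F 0 (indicator D x * u x)) \<in> borel_measurable lebesgue"
      using u borel_measurable_continuous_onI[OF derivative_tower_continuous[OF tower]]
      unfolding H01_def L2_def by (auto intro: measurable_compose)
    then have "set_integrable lebesgue D (\<lambda>x. ?H x * F 0 (indicator D x * u x))"
      using F0(2) by (rule set_integrable_mult_bounded[OF set_integrable_weak_laplacian[OF G]])
    then show ?thesis
      by (rule set_integrable_cong[THEN iffD1, rotated 3]) auto
  qed
  have sign: "AE x in lebesgue. x \<in> D \<longrightarrow>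
      0 \<le> ?H x * F 0 (u x) \<and> (?H x * F 0 (u x) = 0 \<longrightarrow> \<sigma> * u x \<le> a)"
    using pos
  proof eventually_elim
    case (elim x)
    have eq: "?H x * F 0 (u x) = (\<sigma> * ?H x) * flat 0 (\<sigma> * u x - a)"
      by (simp add: F_def algebra_simps)
    show ?case
    proof (cases "\<sigma> * u x > a")
      case True
      then show ?thesis
        using elim flat_0_pos[of "\<sigma> * u x - a"] mult_pos_pos[of "\<sigma> * ?H x" "flat 0 (\<sigma> * u x - a)"]
        unfolding eq by auto
    qed (simp add: eq)
  qed
  have "AE x in lebesgue. x \<in> D \<longrightarrow> ?H x * F 0 (u x) = 0"
    using int int_le by (rule AE_eq_0_if_set_integral_nonpos) (use sign in \<open>eventually_elim, blast\<close>)
  then show ?thesis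
    using sign by eventually_elim blast
qed

lemma laplacian_sign_above_level:
  fixes L v k a \<sigma> :: real and f :: "real \<Rightarrow> real"
  assumes "- L + k\<^sup>2 * v + f v = 0" "k > 0" "a \<ge> 0" "\<forall>v. \<bar>v\<bar> \<ge> a \<longrightarrow> v * f v \<ge> 0"
    and "\<sigma> = 1 \<or> \<sigma> = -1" "\<sigma> * v > a"
  shows "\<sigma> * L > 0"
proof -
  have "\<bar>v\<bar> \<ge> a"
    using assms(5,6) by auto
  then have "(\<sigma> * v) * (\<sigma> * f v) \<ge> 0"
    using assms(4,5) by auto
  moreover have "\<sigma> * v > 0"
    using assms(3,6) by linarith
  ultimately have "\<sigma> * f v \<ge> 0" and "k\<^sup>2 * (\<sigma> * v) > 0"
    using \<open>k > 0\<close> by (auto simp: zero_le_mult_iff)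
  moreover have "L = k\<^sup>2 * v + f v"
    using assms(1) by simp
  then have "\<sigma> * L = k\<^sup>2 * (\<sigma> * v) + \<sigma> * f v"
    by (simp add: algebra_simps)
  ultimately show ?thesis by linarith
qed

theorem lemma2:
  fixes D :: "(real ^ 3) set" and k a :: real and f :: "real \<Rightarrow> real"
    and u :: "real ^ 3 \<Rightarrow> real"
  assumes "open D" and "connected D" and "D \<noteq> {}" and "bounded D"
    and "lipschitz_boundary D"
    and "k > 0" and "a \<ge> 0"
    and "continuous_on {v. \<bar>v\<bar> \<ge> a} f"
    and "bounded (f ` {-a..a})"
    and "\<exists>J. finite J \<and> J \<subseteq> {-a..a} \<and> continuous_on ({-a..a} - J) f \<and>
           (\<forall>v\<in>J. (\<exists>l. (f \<longlongrightarrow> l) (at_left v)) \<and> (\<exists>l. (f \<longlongrightarrow> l) (at_right v)))"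
    and "\<forall>v. \<bar>v\<bar> \<ge> a \<longrightarrow> v * f v \<ge> 0"
    and "H2 D u" and "H01 D u"
    and "solves_eq D k f u"
  shows "AE x in lebesgue. x \<in> D \<longrightarrow> \<bar>u x\<bar> \<le> a"
proof -
  have D: "D \<in> lmeasurable"
    using \<open>bounded D\<close> \<open>open D\<close> by (rule lmeasurable_open)
  obtain g' G where g': "\<And>i. weak_pd D i u (g' i)" and G: "\<And>i j. weak_pd D j (g' i) (G i j)"
    and eq: "AE x in lebesgue. x \<in> D \<longrightarrow> - (\<Sum>i\<in>UNIV. G i i x) + k\<^sup>2 * u x + f (u x) = 0"
    using \<open>solves_eq D k f u\<close> unfolding solves_eq_def by blast
  have bound: "AE x in lebesgue. x \<in> D \<longrightarrow> \<sigma> * u x \<le> a" if "\<sigma> = 1 \<or> \<sigma> = -1" for \<sigma> :: real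
  proof (rule weak_maximum_principle[OF D \<open>H01 D u\<close> \<open>a \<ge> 0\<close> g' G])
    show "AE x in lebesgue. x \<in> D \<longrightarrow> \<sigma> * u x > a \<longrightarrow> \<sigma> * (\<Sum>i\<in>UNIV. G i i x) > 0"
      using eq by eventually_elim
        (use laplacian_sign_above_level[OF _ \<open>k > 0\<close> \<open>a \<ge> 0\<close> \<open>\<forall>v. \<bar>v\<bar> \<ge> a \<longrightarrow> v * f v \<ge> 0\<close> that]
          in blast)
  qed
  have "AE x in lebesgue. x \<in> D \<longrightarrow> 1 * u x \<le> a" "AE x in lebesgue. x \<in> D \<longrightarrow> -1 * u x \<le> a"
    by (rule bound; simp)+
  then show ?thesis
    by eventually_elim auto
qed

end
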